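(* Let $\mathcal{X}$ be a Polish space with a complete consistent metric $d$, let $\Theta$ be a Polish space, let $\mathcal{P}\colon\Theta\to\mathcal{M}(\mathcal{X})$ be measurable with image $\mathcal{A}_0:=\mathcal{P}(\Theta)$, and assume $\mathcal{P}$ is positive: $\mu(B_\delta(x))>0$ for all $\mu\in\mathcal{A}_0$, $x\in\mathcal{X}$, $\delta>0$. Let $\Pi_\Theta\subseteq\mathcal{M}(\Theta)$, $\Pi_0:=\mathcal{P}\Pi_\Theta\subseteq\mathcal{M}(\mathcal{A}_0)$, and let $\Phi_0\colon\mathcal{M}(\mathcal{X})\to\mathbb{R}$ be measurable and semibounded. Let $\delta>0$ and $0<\alpha<1$ satisfy $\mathcal{P}_\infty(\delta)<\alpha$. Then, for all integers $n\ge1$ and all $(x_1,\dots,x_n)\in\mathcal{X}^n$, \[\mathcal{U}(\Pi_\alpha\,|\,B^n_\delta)\ge\Pi_0^\infty(\Phi_0),\] and similarly $\mathcal{L}(\Pi_\alpha\,|\,B^n_\delta)\le\inf_{\pi\in\Pi_0}\sup\{r\in\mathbb{R}:\pi[\Phi_0<r]=0\}$.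
   Context: $\mathcal{M}(\mathcal{X})$ is the set of Borel probability measures on $\mathcal{X}$ with the weak topology, metrized by the Prokhorov metric $d_{\mathcal{M}}(\mu_1,\mu_2):=\inf\{\varepsilon>0:\mu_1(A)\le\mu_2(A^\varepsilon)+\varepsilon\ \forall A\in\mathcal{B}(\mathcal{X})\}$, $A^\varepsilon=\{x:d(x,x')<\varepsilon\text{ for some }x'\in A\}$. $B_\delta(x)$ is the open $d$-ball of radius $\delta$ about $x$; $B_\alpha(\mu)$ is the open Prokhorov ball. $\mathcal{P}\Pi_\Theta$ is the set of pushforwards. $\mathcal{P}_\infty(\delta):=\sup_{x\in\mathcal{X}}\sup_{\theta\in\Theta}\mathcal{P}(\theta)[B_\delta(x)]$. Let $\mathcal{A}_\alpha:=\bigcup_{\mu\in\mathcal{A}_0}B_\alpha(\mu)$, $\mathcal{A}:=\{(\mu_1,\mu_2)\in\mathcal{M}(\mathcal{X})^2:\mu_1\in\mathcal{A}_0,\ d_{\mathcal{M}}(\mu_1,\mu_2)<\alpha\}$, $P_0(\mu_1,\mu_2)=\mu_1$, $P_\alpha(\mu_1,\mu_2)=\mu_2$, and $\Pi_\alpha:=P_\alpha P_0^{-1}\Pi_0=\{P_\alpha\pi:\pi\in\mathcal{M}(\mathcal{A}),\ P_0\pi\in\Pi_0\}\subseteq\mathcal{M}(\mathcal{A}_\alpha)$. $B^n_\delta:=\prod_{i=1}^nB_\delta(x_i)$; the data distribution under $\mu$ is $\mu^n$. For $\pi\in\mathcal{M}(\mathcal{A}_\alpha)$ with $\mathbb{E}_{\mu\sim\pi}[\mu^n(B^n_\delta)]>0$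 the posterior value is $\mathbb{E}_{\mu\sim\pi}[\Phi_0(\mu)\mu^n(B^n_\delta)]/\mathbb{E}_{\mu\sim\pi}[\mu^n(B^n_\delta)]$; $\mathcal{U}(\Pi_\alpha|B^n_\delta)$ (resp. $\mathcal{L}$) is its supremum (resp. infimum) over such $\pi\in\Pi_\alpha$ ($\sup\varnothing=-\infty$, $\inf\varnothing=+\infty$). $\Pi_0^\infty(\Phi_0):=\sup_{\pi\in\Pi_0}\inf\{r\in\mathbb{R}:\pi[\Phi_0>r]=0\}$. *)

theory Defs
  imports "HOL-Probability.Probability"
begin

definition enlarge :: "'a::metric_space set \<Rightarrow> real \<Rightarrow> 'a set" where
  "enlarge A e = (\<Union>x'\<in>A. ball x' e)"

definition prokhorov :: "'a::metric_space measure \<Rightarrow> 'a measure \<Rightarrow> real" where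
  "prokhorov \<mu>1 \<mu>2 = Inf {e. e > 0 \<and>
      (\<forall>A\<in>sets (borel :: 'a measure). measure \<mu>1 A \<le> measure \<mu>2 (enlarge A e) + e)}"

definition P_infty :: "('b \<Rightarrow> 'a::metric_space measure) \<Rightarrow> real \<Rightarrow> real" where
  "P_infty P \<delta> = Sup {measure (P \<theta>) (ball x \<delta>) | x \<theta>. True}"

definition positive_model :: "('b \<Rightarrow> 'a::metric_space measure) \<Rightarrow> bool" where
  "positive_model P \<longleftrightarrow> (\<forall>\<theta> x \<delta>. \<delta> > 0 \<longrightarrow> measure (P \<theta>) (ball x \<delta>) > 0)"

definition semibounded :: "('a::topological_space measure \<Rightarrow> real) \<Rightarrow> bool" where
  "semibounded \<Phi> \<longleftrightarrow>
     (\<exists>c. \<forall>\<mu>\<in>space (prob_algebra (borel :: 'a measure)). \<Phi> \<mu> \<le> c) \<or>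
     (\<exists>c. \<forall>\<mu>\<in>space (prob_algebra (borel :: 'a measure)). c \<le> \<Phi> \<mu>)"

definition pushforwards ::
  "('b::topological_space \<Rightarrow> 'a::topological_space measure) \<Rightarrow> 'b measure set \<Rightarrow> 'a measure measure set" where
  "pushforwards P PiT = (\<lambda>\<pi>. distr \<pi> (prob_algebra borel) P) ` PiT"

definition pair_set ::
  "('b \<Rightarrow> 'a::metric_space measure) \<Rightarrow> real \<Rightarrow> ('a measure \<times> 'a measure) set" where
  "pair_set P \<alpha> = {(\<mu>1, \<mu>2). \<mu>1 \<in> range P \<and> \<mu>2 \<in> space (prob_algebra (borel :: 'a measure))
                        \<and> prokhorov \<mu>1 \<mu>2 < \<alpha>}"

text \<open>Pi_alpha = P_alpha P_0^{-1} Pi_0; elements of M(A) are probability measures on the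
  subspace A of M(X) x M(X).\<close>
definition Pi_alpha ::
  "('b::topological_space \<Rightarrow> 'a::metric_space measure) \<Rightarrow> 'b measure set \<Rightarrow> real \<Rightarrow> 'a measure measure set" where
  "Pi_alpha P PiT \<alpha> =
     {distr \<pi> (prob_algebra borel) snd | \<pi>.
        \<pi> \<in> space (prob_algebra (restrict_space (prob_algebra borel \<Otimes>\<^sub>M prob_algebra borel) (pair_set P \<alpha>)))
        \<and> distr \<pi> (prob_algebra borel) fst \<in> pushforwards P PiT}"

definition data_lik :: "nat \<Rightarrow> (nat \<Rightarrow> 'a::metric_space) \<Rightarrow> real \<Rightarrow> 'a measure \<Rightarrow> real" where
  "data_lik n x \<delta> \<mu> = measure (PiM {..<n} (\<lambda>_. \<mu>)) (PiE {..<n} (\<lambda>i. ball (x i) \<delta>))"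

definition ext_integral :: "'c measure \<Rightarrow> ('c \<Rightarrow> real) \<Rightarrow> ereal" where
  "ext_integral M f = enn2ereal (\<integral>\<^sup>+ t. ennreal (f t) \<partial>M) - enn2ereal (\<integral>\<^sup>+ t. ennreal (- f t) \<partial>M)"

definition post_value ::
  "('a::metric_space measure \<Rightarrow> real) \<Rightarrow> nat \<Rightarrow> (nat \<Rightarrow> 'a) \<Rightarrow> real \<Rightarrow> 'a measure measure \<Rightarrow> ereal" where
  "post_value \<Phi> n x \<delta> \<pi> =
     ext_integral \<pi> (\<lambda>\<mu>. \<Phi> \<mu> * data_lik n x \<delta> \<mu>) / ereal (\<integral>\<mu>. data_lik n x \<delta> \<mu> \<partial>\<pi>)"

definition upper_post ::
  "('a::metric_space measure \<Rightarrow> real) \<Rightarrow> 'a measure measure set \<Rightarrow> nat \<Rightarrow> (nat \<Rightarrow> 'a) \<Rightarrow> real \<Rightarrow> ereal" where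
  "upper_post \<Phi> Pis n x \<delta> =
     Sup {post_value \<Phi> n x \<delta> \<pi> | \<pi>. \<pi> \<in> Pis \<and> (\<integral>\<mu>. data_lik n x \<delta> \<mu> \<partial>\<pi>) > 0}"

definition lower_post ::
  "('a::metric_space measure \<Rightarrow> real) \<Rightarrow> 'a measure measure set \<Rightarrow> nat \<Rightarrow> (nat \<Rightarrow> 'a) \<Rightarrow> real \<Rightarrow> ereal" where
  "lower_post \<Phi> Pis n x \<delta> =
     Inf {post_value \<Phi> n x \<delta> \<pi> | \<pi>. \<pi> \<in> Pis \<and> (\<integral>\<mu>. data_lik n x \<delta> \<mu> \<partial>\<pi>) > 0}"

definition ess_sup_val :: "'c measure \<Rightarrow> ('c \<Rightarrow> real) \<Rightarrow> ereal" where
  "ess_sup_val \<pi> \<Phi> = Inf (ereal ` {r. emeasure \<pi> {t \<in> space \<pi>. \<Phi> t > r} = 0})"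

definition ess_inf_val :: "'c measure \<Rightarrow> ('c \<Rightarrow> real) \<Rightarrow> ereal" where
  "ess_inf_val \<pi> \<Phi> = Sup (ereal ` {r. emeasure \<pi> {t \<in> space \<pi>. \<Phi> t < r} = 0})"

definition Pi_infty_sup :: "'c measure set \<Rightarrow> ('c \<Rightarrow> real) \<Rightarrow> ereal" where
  "Pi_infty_sup Pis \<Phi> = Sup ((\<lambda>\<pi>. ess_sup_val \<pi> \<Phi>) ` Pis)"

definition Pi_infty_inf :: "'c measure set \<Rightarrow> ('c \<Rightarrow> real) \<Rightarrow> ereal" where
  "Pi_infty_inf Pis \<Phi> = Inf ((\<lambda>\<pi>. ess_inf_val \<pi> \<Phi>) ` Pis)"

end

theory Submission
  imports Defs
begin

text \<open>Let \<open>\<pi>\<^sub>0 = P\<^sub>*\<pi>\<close> and let \<open>r\<close> lie below the \<open>\<pi>\<^sub>0\<close>-essential supremum of \<open>\<Phi>\<close>,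
  so that \<open>S = {\<Phi> > r}\<close> has positive \<open>\<pi>\<^sub>0\<close>-mass. Perturb the model outside \<open>P\<^sup>-\<^sup>1 S\<close>:
  push the ball of radius \<open>\<delta>\<close> around the first data point by a measurable map onto a
  point outside it. This moves mass at most \<open>P_infty P \<delta> < \<alpha>\<close>, so the coupling \<open>\<theta> \<mapsto> (P \<theta>, F \<theta>)\<close> puts \<open>F\<^sub>*\<pi>\<close> into \<open>\<Pi>\<^sub>\<alpha>\<close>;
  and the perturbed measures give the data likelihood zero, so the posterior of \<open>F\<^sub>*\<pi>\<close>
  only sees models in \<open>S\<close>, where \<open>\<Phi> > r\<close>. The lower bound is symmetric.\<close>

lemma prob_algebra_memD:
  assumes "\<mu> \<in> space (prob_algebra (borel :: 'a::topological_space measure))"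
  shows "prob_space \<mu>" "sets \<mu> = sets borel" "space \<mu> = UNIV"
  using assms sets_eq_imp_space_eq[of \<mu> borel] by (auto simp: space_prob_algebra)

lemma ext_integral_eq_integral:
  assumes "integrable M f"
  shows "ext_integral M f = ereal (integral\<^sup>L M f)"
proof -
  have "(\<integral>\<^sup>+ t. ennreal (f t) \<partial>M) \<noteq> \<infinity>" "(\<integral>\<^sup>+ t. ennreal (- f t) \<partial>M) \<noteq> \<infinity>"
    using assms by (auto simp: real_integrable_def)
  moreover have "enn2ereal a = ereal (enn2real a)" if "a \<noteq> \<infinity>" for a
  proof -
    have "ennreal (enn2real a) = a" using that by (simp add: ennreal_enn2real_if)
    then show ?thesis using enn2ereal_ennreal[OF enn2real_nonneg, of a] by simp
  qed
  ultimately show ?thesis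
    unfolding ext_integral_def real_lebesgue_integral_def[OF assms] by simp
qed

lemma ext_integral_mono:
  assumes "\<And>t. t \<in> space M \<Longrightarrow> f t \<le> g t"
  shows "ext_integral M f \<le> ext_integral M g"
proof -
  have "(\<integral>\<^sup>+ t. ennreal (f t) \<partial>M) \<le> (\<integral>\<^sup>+ t. ennreal (g t) \<partial>M)"
    "(\<integral>\<^sup>+ t. ennreal (- g t) \<partial>M) \<le> (\<integral>\<^sup>+ t. ennreal (- f t) \<partial>M)"
    using assms by (auto intro!: nn_integral_mono ennreal_leI)
  then show ?thesis
    unfolding ext_integral_def by (intro ereal_minus_mono) (simp_all add: less_eq_ennreal.rep_eq)
qed

lemma ext_integral_distr:
  assumes F: "F \<in> M \<rightarrow>\<^sub>M N" and g: "g \<in> borel_measurable N"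
  shows "ext_integral (distr M N F) g = ext_integral M (\<lambda>t. g (F t))"
proof -
  have "(\<lambda>t. ennreal (g t)) \<in> borel_measurable N" "(\<lambda>t. ennreal (- g t)) \<in> borel_measurable N"
    using g by measurable
  then show ?thesis
    unfolding ext_integral_def by (simp add: nn_integral_distr[OF F])
qed

lemma integral_pos_of_pos_on:
  fixes f :: "'a \<Rightarrow> real"
  assumes f: "integrable M f" "\<And>t. t \<in> space M \<Longrightarrow> 0 \<le> f t"
    and A: "A \<in> sets M" "emeasure M A \<noteq> 0" "\<And>t. t \<in> A \<Longrightarrow> 0 < f t"
  shows "0 < integral\<^sup>L M f"
proof -
  have nonneg: "AE t in M. 0 \<le> f t"
    using f(2) by (rule AE_I2)
  have "integral\<^sup>L M f \<noteq> 0"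
  proof
    assume "integral\<^sup>L M f = 0"
    then have "AE t in M. f t = 0"
      using integral_nonneg_eq_0_iff_AE[OF f(1) nonneg] by simp
    then have "AE t in M. t \<notin> A"
      by eventually_elim (use A(3) in fastforce)
    moreover have "{t \<in> space M. \<not> t \<notin> A} = A"
      using sets.sets_into_space[OF A(1)] by auto
    ultimately have "emeasure M A = 0"
      by (simp add: AE_iff_measurable[OF A(1)])
    then show False
      using A(2) by simp
  qed
  then show ?thesis
    using integral_nonneg_AE[OF nonneg] by linarith
qed

lemma data_lik_eq_prod:
  fixes \<nu> :: "'a::metric_space measure"
  assumes "prob_space \<nu>" "sets \<nu> = sets borel"
  shows "data_lik n x \<delta> \<nu> = (\<Prod>i<n. measure \<nu> (ball (x i) \<delta>))"
proof -
  interpret product_sigma_finite "\<lambda>_::nat. \<nu>"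
    unfolding product_sigma_finite_def using assms prob_space_imp_sigma_finite by blast
  have "emeasure (PiM {..<n} (\<lambda>_. \<nu>)) (PiE {..<n} (\<lambda>i. ball (x i) \<delta>))
      = (\<Prod>i<n. emeasure \<nu> (ball (x i) \<delta>))"
    by (rule emeasure_PiM) (auto simp: assms)
  also have "\<dots> = ennreal (\<Prod>i<n. measure \<nu> (ball (x i) \<delta>))"
    using assms by (simp add: finite_measure.emeasure_eq_measure prob_space_def prod_ennreal)
  finally show ?thesis
    unfolding data_lik_def measure_def by (simp add: prod_nonneg)
qed

lemma data_lik_nonneg: "0 \<le> data_lik n x \<delta> \<nu>"
  unfolding data_lik_def by simp

lemma data_lik_le_1:
  assumes "prob_space \<nu>" "sets \<nu> = sets borel"
  shows "data_lik n x \<delta> \<nu> \<le> 1"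
  using assms by (simp add: data_lik_eq_prod prod_le_1 prob_space.prob_le_1)

lemma measurable_data_lik:
  "data_lik n x \<delta> \<in> borel_measurable (prob_algebra (borel :: 'a::metric_space measure))"
proof -
  have "(\<lambda>\<nu>. \<Prod>i<n. measure \<nu> (ball (x i) \<delta>)) \<in> borel_measurable (prob_algebra (borel :: 'a measure))"
    by measurable
  then show ?thesis
    by (rule measurable_cong[THEN iffD1, rotated]) (auto simp: space_prob_algebra data_lik_eq_prod)
qed

lemma data_lik_pos:
  assumes "P \<in> borel \<rightarrow>\<^sub>M prob_algebra (borel :: 'a::metric_space measure)"
    and "positive_model P" "\<delta> > 0"
  shows "0 < data_lik n x \<delta> (P \<theta>)"
  using assms measurable_space[OF assms(1), of \<theta>]
  by (simp add: data_lik_eq_prod prob_algebra_memD positive_model_def prod_pos)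

lemma integrable_data_lik_comp:
  assumes "finite_measure M" "F \<in> M \<rightarrow>\<^sub>M prob_algebra (borel :: 'a::metric_space measure)"
  shows "integrable M (\<lambda>t. data_lik n x \<delta> (F t))"
proof (rule finite_measure.integrable_const_bound[where B=1])
  show "AE t in M. norm (data_lik n x \<delta> (F t)) \<le> 1"
    using measurable_space[OF assms(2)]
    by (intro AE_I2) (simp add: data_lik_nonneg data_lik_le_1 prob_algebra_memD)
qed (use assms measurable_compose[OF assms(2) measurable_data_lik] in auto)

lemma post_value_distr:
  assumes F: "F \<in> M \<rightarrow>\<^sub>M prob_algebra borel" and \<Phi>: "\<Phi> \<in> borel_measurable (prob_algebra borel)"
  shows "post_value \<Phi> n x \<delta> (distr M (prob_algebra borel) F) =
    ext_integral M (\<lambda>t. \<Phi> (F t) * data_lik n x \<delta> (F t)) / ereal (\<integral>t. data_lik n x \<delta> (F t) \<partial>M)"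
proof -
  have "(\<lambda>\<mu>. \<Phi> \<mu> * data_lik n x \<delta> \<mu>) \<in> borel_measurable (prob_algebra borel)"
    using \<Phi> measurable_data_lik by (rule borel_measurable_times)
  then show ?thesis
    by (simp add: post_value_def ext_integral_distr[OF F] integral_distr[OF F measurable_data_lik])
qed

lemma post_value_distr_bounds:
  assumes M: "finite_measure M" and F: "F \<in> M \<rightarrow>\<^sub>M prob_algebra borel"
    and \<Phi>: "\<Phi> \<in> borel_measurable (prob_algebra borel)"
    and evidence: "0 < (\<integral>t. data_lik n x \<delta> (F t) \<partial>M)"
    and localized: "\<And>t. data_lik n x \<delta> (F t) \<noteq> 0 \<Longrightarrow> F t \<in> S"
  shows "(\<And>\<mu>. \<mu> \<in> S \<Longrightarrow> r \<le> \<Phi> \<mu>) \<Longrightarrow> ereal r \<le> post_value \<Phi> n x \<delta> (distr M (prob_algebra borel) F)"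
    and "(\<And>\<mu>. \<mu> \<in> S \<Longrightarrow> \<Phi> \<mu> \<le> r) \<Longrightarrow> post_value \<Phi> n x \<delta> (distr M (prob_algebra borel) F) \<le> ereal r"
proof -
  define L where "L t = data_lik n x \<delta> (F t)" for t
  define I where "I = (\<integral>t. L t \<partial>M)"
  have post: "post_value \<Phi> n x \<delta> (distr M (prob_algebra borel) F) =
      ext_integral M (\<lambda>t. \<Phi> (F t) * L t) / ereal I"
    unfolding L_def I_def by (rule post_value_distr[OF F \<Phi>])
  have ext_scaled: "ext_integral M (\<lambda>t. c * L t) = ereal (c * I)" for c
    unfolding I_def L_def using integrable_data_lik_comp[OF M F] by (simp add: ext_integral_eq_integral)
  have scale: "a * L t \<le> b * L t" if "F t \<in> S \<Longrightarrow> a \<le> b" for a b t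
    using that localized[of t] by (cases "L t = 0") (auto simp: L_def data_lik_nonneg intro: mult_right_mono)
  have "0 < I"
    using evidence by (simp add: I_def L_def)
  show "ereal r \<le> post_value \<Phi> n x \<delta> (distr M (prob_algebra borel) F)"
    if "\<And>\<mu>. \<mu> \<in> S \<Longrightarrow> r \<le> \<Phi> \<mu>"
  proof -
    have "ext_integral M (\<lambda>t. r * L t) \<le> ext_integral M (\<lambda>t. \<Phi> (F t) * L t)"
      using that by (intro ext_integral_mono scale) simp
    then show ?thesis
      using \<open>0 < I\<close> by (simp add: post ext_scaled ereal_le_divide_pos mult.commute)
  qed
  show "post_value \<Phi> n x \<delta> (distr M (prob_algebra borel) F) \<le> ereal r"
    if "\<And>\<mu>. \<mu> \<in> S \<Longrightarrow> \<Phi> \<mu> \<le> r"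
  proof -
    have "ext_integral M (\<lambda>t. \<Phi> (F t) * L t) \<le> ext_integral M (\<lambda>t. r * L t)"
      using that by (intro ext_integral_mono scale) simp
    then show ?thesis
      using \<open>0 < I\<close> by (simp add: post ext_scaled ereal_divide_le_pos mult.commute)
  qed
qed

lemma prokhorov_le:
  fixes \<mu> \<nu> :: "'a::metric_space measure"
  assumes "0 < e" "c \<le> e" and \<nu>: "finite_measure \<nu>" "sets \<nu> = sets borel"
    and bound: "\<And>A. A \<in> sets borel \<Longrightarrow> measure \<mu> A \<le> measure \<nu> A + c"
  shows "prokhorov \<mu> \<nu> \<le> e"
  unfolding prokhorov_def
proof (rule cInf_lower)
  have "measure \<mu> A \<le> measure \<nu> (enlarge A e) + e" if A: "A \<in> sets borel" for A
  proof -
    have "A \<subseteq> enlarge A e" "open (enlarge A e)"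
      using \<open>0 < e\<close> by (auto simp: enlarge_def)
    then have "measure \<nu> A \<le> measure \<nu> (enlarge A e)"
      using \<nu> A by (intro finite_measure.finite_measure_mono) auto
    then show ?thesis using bound[OF A] \<open>c \<le> e\<close> by linarith
  qed
  then show "e \<in> {e. e > 0 \<and> (\<forall>A\<in>sets (borel :: 'a measure). measure \<mu> A \<le> measure \<nu> (enlarge A e) + e)}"
    using \<open>0 < e\<close> by auto
qed (auto intro: bdd_belowI[of _ 0])

lemma prokhorov_distr_le:
  fixes \<mu> :: "'a::metric_space measure"
  assumes \<mu>: "prob_space \<mu>" "sets \<mu> = sets borel"
    and h: "h \<in> borel \<rightarrow>\<^sub>M borel" and fixed: "\<And>y. y \<notin> B \<Longrightarrow> h y = y"
    and B: "B \<in> sets borel" "measure \<mu> B \<le> e" and "0 < e"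
  shows "prokhorov \<mu> (distr \<mu> borel h) \<le> e"
proof (rule prokhorov_le[OF \<open>0 < e\<close> B(2)])
  have h\<mu>: "h \<in> \<mu> \<rightarrow>\<^sub>M borel"
    using h measurable_cong_sets[OF \<mu>(2) refl] by blast
  then show "finite_measure (distr \<mu> borel h)"
    using prob_space.prob_space_distr[OF \<mu>(1) h\<mu>] by (simp add: prob_space_def)
  fix A :: "'a set" assume A: "A \<in> sets borel"
  have space: "space \<mu> = UNIV"
    using \<mu>(2) sets_eq_imp_space_eq by fastforce
  have "A \<subseteq> (h -` A \<inter> space \<mu>) \<union> B"
    using fixed space by force
  then have "measure \<mu> A \<le> measure \<mu> ((h -` A \<inter> space \<mu>) \<union> B)"
    using A B \<mu> measurable_sets[OF h\<mu> A]
    by (intro finite_measure.finite_measure_mono) (auto simp: prob_space_def)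
  also have "\<dots> \<le> measure \<mu> (h -` A \<inter> space \<mu>) + measure \<mu> B"
    using A B \<mu> measurable_sets[OF h\<mu> A] by (intro measure_Un_le) auto
  finally show "measure \<mu> A \<le> measure (distr \<mu> borel h) A + measure \<mu> B"
    by (simp add: measure_distr[OF h\<mu> A])
qed simp

lemma exists_measurable_map_avoiding:
  fixes B :: "'a::topological_space set"
  assumes "B \<in> sets borel" "B \<noteq> UNIV"
  obtains h :: "'a \<Rightarrow> 'a"
  where "h \<in> borel \<rightarrow>\<^sub>M borel" "\<And>y. y \<notin> B \<Longrightarrow> h y = y" "\<And>y. h y \<notin> B"
proof -
  obtain z where "z \<notin> B" using assms(2) by blast
  show ?thesis
  proof
    show "(\<lambda>y. if y \<in> B then z else y) \<in> borel \<rightarrow>\<^sub>M borel"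
      using assms(1) by (intro measurable_If_set) auto
  qed (use \<open>z \<notin> B\<close> in auto)
qed

lemma distr_in_Pi_alpha:
  fixes P F :: "'b::topological_space \<Rightarrow> 'a::metric_space measure"
  assumes P: "P \<in> borel \<rightarrow>\<^sub>M prob_algebra borel" and F: "F \<in> borel \<rightarrow>\<^sub>M prob_algebra borel"
    and close: "\<And>\<theta>. prokhorov (P \<theta>) (F \<theta>) < \<alpha>"
    and \<pi>: "\<pi> \<in> PiT" "PiT \<subseteq> space (prob_algebra borel)"
  shows "distr \<pi> (prob_algebra borel) F \<in> Pi_alpha P PiT \<alpha>"
proof -
  define R where
    "R = restrict_space (prob_algebra borel \<Otimes>\<^sub>M prob_algebra (borel :: 'a measure)) (pair_set P \<alpha>)"
  have \<pi>_prob: "prob_space \<pi>" "sets \<pi> = sets borel"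
    using \<pi> prob_algebra_memD[of \<pi>] by auto
  have coupling: "(\<lambda>\<theta>. (P \<theta>, F \<theta>)) \<in> \<pi> \<rightarrow>\<^sub>M R"
    unfolding R_def measurable_cong_sets[OF \<pi>_prob(2) refl]
  proof (rule measurable_restrict_space2)
    show "(\<lambda>\<theta>. (P \<theta>, F \<theta>)) \<in> space borel \<rightarrow> pair_set P \<alpha>"
      using close measurable_space[OF F] by (auto simp: pair_set_def)
  qed (use P F in measurable)
  have "fst \<in> R \<rightarrow>\<^sub>M prob_algebra borel" "snd \<in> R \<rightarrow>\<^sub>M prob_algebra borel"
    unfolding R_def by (intro measurable_restrict_space1 measurable_fst measurable_snd)+
  then have "distr (distr \<pi> R (\<lambda>\<theta>. (P \<theta>, F \<theta>))) (prob_algebra borel) fst = distr \<pi> (prob_algebra borel) P"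
    "distr (distr \<pi> R (\<lambda>\<theta>. (P \<theta>, F \<theta>))) (prob_algebra borel) snd = distr \<pi> (prob_algebra borel) F"
    by (simp_all add: distr_distr[OF _ coupling] comp_def)
  moreover have "distr \<pi> R (\<lambda>\<theta>. (P \<theta>, F \<theta>)) \<in> space (prob_algebra R)"
    unfolding space_prob_algebra using prob_space.prob_space_distr[OF \<pi>_prob(1) coupling] by simp
  ultimately show ?thesis
    unfolding Pi_alpha_def pushforwards_def R_def using \<pi>(1) by (auto intro!: exI image_eqI)
qed

lemma measure_le_P_infty:
  assumes "P \<in> borel \<rightarrow>\<^sub>M prob_algebra (borel :: 'a::metric_space measure)"
  shows "measure (P \<theta>) (ball y \<delta>) \<le> P_infty P \<delta>"
  unfolding P_infty_def
proof (rule cSup_upper)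
  have "prob_space (P \<theta>)" for \<theta>
    using measurable_space[OF assms] by (simp add: prob_algebra_memD)
  then show "bdd_above {measure (P \<theta>) (ball x \<delta>) |x \<theta>. True}"
    by (intro bdd_aboveI[of _ 1]) (auto simp: prob_space.prob_le_1)
qed auto

lemma exists_perturbed_model:
  fixes P :: "'b::topological_space \<Rightarrow> 'a::metric_space measure"
  assumes P: "P \<in> borel \<rightarrow>\<^sub>M prob_algebra borel"
    and \<alpha>: "P_infty P \<delta> < \<alpha>" "\<alpha> \<le> 1" and "n \<ge> 1"
    and S: "S \<in> sets (prob_algebra borel)"
  obtains F where "F \<in> borel \<rightarrow>\<^sub>M prob_algebra borel" "\<And>\<theta>. prokhorov (P \<theta>) (F \<theta>) < \<alpha>"
    "\<And>\<theta>. P \<theta> \<in> S \<Longrightarrow> F \<theta> = P \<theta>" "\<And>\<theta>. P \<theta> \<notin> S \<Longrightarrow> data_lik n x \<delta> (F \<theta>) = 0"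
proof -
  have P\<theta>: "prob_space (P \<theta>)" "sets (P \<theta>) = sets borel" "space (P \<theta>) = UNIV" for \<theta>
    using measurable_space[OF P] by (simp_all add: prob_algebra_memD)
  have P_small: "measure (P \<theta>) (ball (x 0) \<delta>) < \<alpha>" for \<theta>
    using measure_le_P_infty[OF P] \<alpha>(1) by (rule le_less_trans)
  have "ball (x 0) \<delta> \<noteq> UNIV"
    using P_small[of undefined] prob_space.prob_space[OF P\<theta>(1)] P\<theta>(3) \<alpha>(2) by force
  then obtain h where h: "h \<in> borel \<rightarrow>\<^sub>M borel" "\<And>y. y \<notin> ball (x 0) \<delta> \<Longrightarrow> h y = y"
    "\<And>y. h y \<notin> ball (x 0) \<delta>"
    by (rule exists_measurable_map_avoiding[rotated]) auto
  have h\<theta>: "h \<in> P \<theta> \<rightarrow>\<^sub>M borel" for \<theta>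
    using h(1) measurable_cong_sets[OF P\<theta>(2) refl] by blast
  have moved: "prob_space (distr (P \<theta>) borel h)" "sets (distr (P \<theta>) borel h) = sets borel" for \<theta>
    using prob_space.prob_space_distr[OF P\<theta>(1) h\<theta>] by auto
  define F where "F \<theta> = (if \<theta> \<in> P -` S then P \<theta> else distr (P \<theta>) borel h)" for \<theta>
  show thesis
  proof
    show "F \<in> borel \<rightarrow>\<^sub>M prob_algebra borel"
      unfolding F_def
    proof (intro measurable_If_set P)
      show "(\<lambda>\<theta>. distr (P \<theta>) borel h) \<in> borel \<rightarrow>\<^sub>M prob_algebra borel"
        using measurable_compose[OF P measurable_distr_prob_space[OF h(1)]] .
      show "P -` S \<inter> space borel \<in> sets borel"
        using measurable_sets[OF P S] by simp
    qed
    show "prokhorov (P \<theta>) (F \<theta>) < \<alpha>" for \<theta>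
    proof -
      have "0 < \<alpha>"
        using P_small[of \<theta>] measure_nonneg[of "P \<theta>" "ball (x 0) \<delta>"] by linarith
      then have "prokhorov (P \<theta>) (P \<theta>) \<le> \<alpha> / 2"
        using P\<theta> by (intro prokhorov_le[where c=0]) (auto simp: prob_space_def)
      moreover have "prokhorov (P \<theta>) (distr (P \<theta>) borel h) \<le> (measure (P \<theta>) (ball (x 0) \<delta>) + \<alpha>) / 2"
        using P_small[of \<theta>] measure_nonneg[of "P \<theta>" "ball (x 0) \<delta>"] \<open>0 < \<alpha>\<close>
        by (intro prokhorov_distr_le[OF P\<theta>(1,2) h(1), of "ball (x 0) \<delta>"] h(2)) (auto intro: add_nonneg_pos)
      ultimately show ?thesis
        using P_small[of \<theta>] \<open>0 < \<alpha>\<close> by (auto simp: F_def)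
    qed
    show "F \<theta> = P \<theta>" if "P \<theta> \<in> S" for \<theta>
      using that by (simp add: F_def)
    show "data_lik n x \<delta> (F \<theta>) = 0" if "P \<theta> \<notin> S" for \<theta>
    proof -
      have "h -` ball (x 0) \<delta> = {}"
        using h(3) by blast
      then have "measure (distr (P \<theta>) borel h) (ball (x 0) \<delta>) = 0"
        by (simp add: measure_distr[OF h\<theta>])
      then show ?thesis
        using that \<open>n \<ge> 1\<close> by (auto simp: F_def data_lik_eq_prod[OF moved] intro!: prod_zero)
    qed
  qed
qed

lemma exists_prior_localized:
  fixes P :: "'b::topological_space \<Rightarrow> 'a::metric_space measure"
  assumes P: "P \<in> borel \<rightarrow>\<^sub>M prob_algebra borel" "positive_model P" "\<delta> > 0"
    and \<alpha>: "P_infty P \<delta> < \<alpha>" "\<alpha> \<le> 1" and "n \<ge> 1"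
    and \<Phi>: "\<Phi> \<in> borel_measurable (prob_algebra borel)"
    and \<pi>: "\<pi> \<in> PiT" "PiT \<subseteq> space (prob_algebra borel)"
    and S: "S \<in> sets (prob_algebra borel)" "emeasure (distr \<pi> (prob_algebra borel) P) S \<noteq> 0"
  obtains \<pi>' where "\<pi>' \<in> Pi_alpha P PiT \<alpha>" "0 < (\<integral>\<mu>. data_lik n x \<delta> \<mu> \<partial>\<pi>')"
    "\<And>r. (\<And>\<mu>. \<mu> \<in> S \<Longrightarrow> r \<le> \<Phi> \<mu>) \<Longrightarrow> ereal r \<le> post_value \<Phi> n x \<delta> \<pi>'"
    "\<And>r. (\<And>\<mu>. \<mu> \<in> S \<Longrightarrow> \<Phi> \<mu> \<le> r) \<Longrightarrow> post_value \<Phi> n x \<delta> \<pi>' \<le> ereal r"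
proof -
  obtain F where F: "F \<in> borel \<rightarrow>\<^sub>M prob_algebra borel" "\<And>\<theta>. prokhorov (P \<theta>) (F \<theta>) < \<alpha>"
    "\<And>\<theta>. P \<theta> \<in> S \<Longrightarrow> F \<theta> = P \<theta>" "\<And>\<theta>. P \<theta> \<notin> S \<Longrightarrow> data_lik n x \<delta> (F \<theta>) = 0"
    using exists_perturbed_model[OF P(1) \<alpha> \<open>n \<ge> 1\<close> S(1)] by blast
  have \<pi>_prob: "finite_measure \<pi>" "sets \<pi> = sets borel"
    using \<pi> prob_algebra_memD[of \<pi>] by (auto simp: prob_space_def)
  have F\<pi>: "F \<in> \<pi> \<rightarrow>\<^sub>M prob_algebra borel" and P\<pi>: "P \<in> \<pi> \<rightarrow>\<^sub>M prob_algebra borel"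
    using F(1) P(1) by (simp_all add: measurable_cong_sets[OF \<pi>_prob(2) refl])
  have localized: "F \<theta> \<in> S" if "data_lik n x \<delta> (F \<theta>) \<noteq> 0" for \<theta>
    using that F(3,4) by metis
  have evidence: "0 < (\<integral>\<theta>. data_lik n x \<delta> (F \<theta>) \<partial>\<pi>)"
  proof (rule integral_pos_of_pos_on[OF integrable_data_lik_comp[OF \<pi>_prob(1) F\<pi>] _
        measurable_sets[OF P\<pi> S(1)]])
    show "emeasure \<pi> (P -` S \<inter> space \<pi>) \<noteq> 0"
      using S by (simp add: emeasure_distr[OF P\<pi>])
  qed (auto simp: F(3) data_lik_nonneg data_lik_pos[OF P])
  show thesis
  proof
    show "distr \<pi> (prob_algebra borel) F \<in> Pi_alpha P PiT \<alpha>"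
      by (rule distr_in_Pi_alpha[OF P(1) F(1,2) \<pi>])
    show "0 < (\<integral>\<mu>. data_lik n x \<delta> \<mu> \<partial>distr \<pi> (prob_algebra borel) F)"
      using evidence by (simp add: integral_distr[OF F\<pi> measurable_data_lik])
  qed (use post_value_distr_bounds[OF \<pi>_prob(1) F\<pi> \<Phi> evidence localized] in blast)+
qed

lemma Pi_infty_sup_le_upper_post:
  fixes P :: "'b::topological_space \<Rightarrow> 'a::metric_space measure"
  assumes P: "P \<in> borel \<rightarrow>\<^sub>M prob_algebra borel" "positive_model P" "\<delta> > 0"
    and \<alpha>: "P_infty P \<delta> < \<alpha>" "\<alpha> \<le> 1" and "n \<ge> 1"
    and \<Phi>: "\<Phi> \<in> borel_measurable (prob_algebra borel)"
    and PiT: "PiT \<subseteq> space (prob_algebra borel)"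
  shows "Pi_infty_sup (pushforwards P PiT) \<Phi> \<le> upper_post \<Phi> (Pi_alpha P PiT \<alpha>) n x \<delta>"
  unfolding Pi_infty_sup_def
proof (rule SUP_least)
  fix \<pi>\<^sub>0 assume "\<pi>\<^sub>0 \<in> pushforwards P PiT"
  then obtain \<pi> where \<pi>: "\<pi> \<in> PiT" and \<pi>\<^sub>0: "\<pi>\<^sub>0 = distr \<pi> (prob_algebra borel) P"
    by (auto simp: pushforwards_def)
  show "ess_sup_val \<pi>\<^sub>0 \<Phi> \<le> upper_post \<Phi> (Pi_alpha P PiT \<alpha>) n x \<delta>"
  proof (rule ccontr)
    assume "\<not> ?thesis"
    then obtain r where r: "upper_post \<Phi> (Pi_alpha P PiT \<alpha>) n x \<delta> < ereal r" "ereal r < ess_sup_val \<pi>\<^sub>0 \<Phi>"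
      by (meson ereal_dense2 not_le)
    define S where "S = {\<mu> \<in> space (prob_algebra borel). r < \<Phi> \<mu>}"
    have "S = \<Phi> -` {r<..} \<inter> space (prob_algebra borel)"
      by (auto simp: S_def)
    then have S: "S \<in> sets (prob_algebra borel)"
      using measurable_sets[OF \<Phi>] by simp
    have "emeasure \<pi>\<^sub>0 S \<noteq> 0"
    proof
      assume "emeasure \<pi>\<^sub>0 S = 0"
      then have "ess_sup_val \<pi>\<^sub>0 \<Phi> \<le> ereal r"
        unfolding ess_sup_val_def by (intro Inf_lower) (simp add: \<pi>\<^sub>0 S_def)
      then show False
        using r(2) by simp
    qed
    then obtain \<pi>' where \<pi>': "\<pi>' \<in> Pi_alpha P PiT \<alpha>" "0 < (\<integral>\<mu>. data_lik n x \<delta> \<mu> \<partial>\<pi>')"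
      "\<And>r'. (\<And>\<mu>. \<mu> \<in> S \<Longrightarrow> r' \<le> \<Phi> \<mu>) \<Longrightarrow> ereal r' \<le> post_value \<Phi> n x \<delta> \<pi>'"
      using exists_prior_localized[OF P \<alpha> \<open>n \<ge> 1\<close> \<Phi> \<pi> PiT S] unfolding \<pi>\<^sub>0 by metis
    have "ereal r \<le> post_value \<Phi> n x \<delta> \<pi>'"
      by (rule \<pi>'(3)) (simp add: S_def)
    also have "\<dots> \<le> upper_post \<Phi> (Pi_alpha P PiT \<alpha>) n x \<delta>"
      unfolding upper_post_def using \<pi>'(1,2) by (intro Sup_upper) blast
    finally show False
      using r(1) by simp
  qed
qed

lemma lower_post_le_Pi_infty_inf:
  fixes P :: "'b::topological_space \<Rightarrow> 'a::metric_space measure"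
  assumes P: "P \<in> borel \<rightarrow>\<^sub>M prob_algebra borel" "positive_model P" "\<delta> > 0"
    and \<alpha>: "P_infty P \<delta> < \<alpha>" "\<alpha> \<le> 1" and "n \<ge> 1"
    and \<Phi>: "\<Phi> \<in> borel_measurable (prob_algebra borel)"
    and PiT: "PiT \<subseteq> space (prob_algebra borel)"
  shows "lower_post \<Phi> (Pi_alpha P PiT \<alpha>) n x \<delta> \<le> Pi_infty_inf (pushforwards P PiT) \<Phi>"
  unfolding Pi_infty_inf_def
proof (rule INF_greatest)
  fix \<pi>\<^sub>0 assume "\<pi>\<^sub>0 \<in> pushforwards P PiT"
  then obtain \<pi> where \<pi>: "\<pi> \<in> PiT" and \<pi>\<^sub>0: "\<pi>\<^sub>0 = distr \<pi> (prob_algebra borel) P"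
    by (auto simp: pushforwards_def)
  show "lower_post \<Phi> (Pi_alpha P PiT \<alpha>) n x \<delta> \<le> ess_inf_val \<pi>\<^sub>0 \<Phi>"
  proof (rule ccontr)
    assume "\<not> ?thesis"
    then obtain r where r: "ess_inf_val \<pi>\<^sub>0 \<Phi> < ereal r" "ereal r < lower_post \<Phi> (Pi_alpha P PiT \<alpha>) n x \<delta>"
      by (meson ereal_dense2 not_le)
    define S where "S = {\<mu> \<in> space (prob_algebra borel). \<Phi> \<mu> < r}"
    have "S = \<Phi> -` {..<r} \<inter> space (prob_algebra borel)"
      by (auto simp: S_def)
    then have S: "S \<in> sets (prob_algebra borel)"
      using measurable_sets[OF \<Phi>] by simp
    have "emeasure \<pi>\<^sub>0 S \<noteq> 0"
    proof
      assume "emeasure \<pi>\<^sub>0 S = 0"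
      then have "ereal r \<le> ess_inf_val \<pi>\<^sub>0 \<Phi>"
        unfolding ess_inf_val_def by (intro Sup_upper) (simp add: \<pi>\<^sub>0 S_def)
      then show False
        using r(1) by simp
    qed
    then obtain \<pi>' where \<pi>': "\<pi>' \<in> Pi_alpha P PiT \<alpha>" "0 < (\<integral>\<mu>. data_lik n x \<delta> \<mu> \<partial>\<pi>')"
      "\<And>r'. (\<And>\<mu>. \<mu> \<in> S \<Longrightarrow> \<Phi> \<mu> \<le> r') \<Longrightarrow> post_value \<Phi> n x \<delta> \<pi>' \<le> ereal r'"
      using exists_prior_localized[OF P \<alpha> \<open>n \<ge> 1\<close> \<Phi> \<pi> PiT S] unfolding \<pi>\<^sub>0 by metis
    have "lower_post \<Phi> (Pi_alpha P PiT \<alpha>) n x \<delta> \<le> post_value \<Phi> n x \<delta> \<pi>'"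
      unfolding lower_post_def using \<pi>'(1,2) by (intro Inf_lower) blast
    also have "\<dots> \<le> ereal r"
      by (rule \<pi>'(3)) (simp add: S_def)
    finally show False
      using r(2) by simp
  qed
qed

theorem theorem6p9:
  fixes P :: "'b::polish_space \<Rightarrow> 'a::polish_space measure"
    and PiT :: "'b measure set"
    and Phi :: "'a measure \<Rightarrow> real"
    and \<delta> \<alpha> :: real
    and n :: nat
    and x :: "nat \<Rightarrow> 'a"
  assumes "P \<in> borel \<rightarrow>\<^sub>M prob_algebra borel"
    and "positive_model P"
    and "PiT \<subseteq> space (prob_algebra borel)"
    and "Phi \<in> borel_measurable (prob_algebra borel)"
    and "semibounded Phi"
    and "\<delta> > 0" and "0 < \<alpha>" and "\<alpha> < 1"
    and "P_infty P \<delta> < \<alpha>"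
    and "n \<ge> 1"
  shows "upper_post Phi (Pi_alpha P PiT \<alpha>) n x \<delta> \<ge> Pi_infty_sup (pushforwards P PiT) Phi
         \<and> lower_post Phi (Pi_alpha P PiT \<alpha>) n x \<delta> \<le> Pi_infty_inf (pushforwards P PiT) Phi"
proof
  have "\<alpha> \<le> 1"
    using \<open>\<alpha> < 1\<close> by simp
  show "Pi_infty_sup (pushforwards P PiT) Phi \<le> upper_post Phi (Pi_alpha P PiT \<alpha>) n x \<delta>"
    by (rule Pi_infty_sup_le_upper_post[OF assms(1,2,6,9) \<open>\<alpha> \<le> 1\<close> assms(10,4,3)])
  show "lower_post Phi (Pi_alpha P PiT \<alpha>) n x \<delta> \<le> Pi_infty_inf (pushforwards P PiT) Phi"
    by (rule lower_post_le_Pi_infty_inf[OF assms(1,2,6,9) \<open>\<alpha> \<le> 1\<close> assms(10,4,3)])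
qed

end
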